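(* For every base $\mathscr{B}$ and IPL formulas $\varphi,\psi,\chi$: if $\Vdash^{*}_{\mathscr{B}}\varphi\wedge\psi$ and $\varphi,\psi\Vdash^{*}_{\mathscr{B}}\chi$, then $\Vdash^{*}_{\mathscr{B}}\chi$.
   Context: Fix a denumerable set $\mathbb{A}$ of atoms. IPL formulas are built from atoms and $\bot$ using $\wedge,\vee,\to$. An atomic rule has the form $(Q_1\triangleright q_1,\dots,Q_n\triangleright q_n)\Rightarrow q$ with $n\ge 0$, $q,q_i\in\mathbb{A}$, $Q_i$ finite sets of atoms; a base is a set of atomic rules. Derivability $\vdash_{\mathscr{B}}$ is the least relation with $S\cup\{q\}\vdash_{\mathscr{B}} q$, and if $(Q_1\triangleright q_1,\dots,Q_n\triangleright q_n)\Rightarrow q\in\mathscr{B}$ and $S\cup Q_i\vdash_{\mathscr{B}} q_i$ for all $i$ then $S\vdash_{\mathscr{B}} q$. $\Vdash^{*}_{\mathscr{B}}$ is defined inductively: $\Vdash^{*}_{\mathscr{B}}p$ iff $\emptyset\vdash_{\mathscr{B}}p$; $\Vdash^{*}_{\mathscr{B}}\varphi\to\psi$ iff $\varphi\Vdash^{*}_{\mathscr{B}}\psi$; $\Vdash^{*}_{\mathscr{B}}\varphi\wedge\psi$ iff for all $\mathscr{C}\supseteq\mathscr{B}$ and atoms $p$, $\varphi,\psi\Vdash^{*}_{\mathscr{C}}p$ implies $\Vdash^{*}_{\mathscr{C}}p$; $\Vdash^{*}_{\mathscr{B}}\varphi\vee\psi$ iff for all $\mathscr{C}\supseteq\mathscr{B}$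 and atoms $p$, if $\varphi\Vdash^{*}_{\mathscr{C}}p$ and $\psi\Vdash^{*}_{\mathscr{C}}p$ then $\Vdash^{*}_{\mathscr{C}}p$; $\Vdash^{*}_{\mathscr{B}}\bot$ iff $\Vdash^{*}_{\mathscr{B}}p$ for all atoms $p$; for nonempty finite $\Gamma$, $\Gamma\Vdash^{*}_{\mathscr{B}}\varphi$ iff for every $\mathscr{C}\supseteq\mathscr{B}$, if $\Vdash^{*}_{\mathscr{C}}\psi$ for all $\psi\in\Gamma$ then $\Vdash^{*}_{\mathscr{C}}\varphi$. *)

theory Defs
  imports Main "HOL-Library.Countable"
begin

datatype 'a fm = Atom 'a | Bot | Conj "'a fm" "'a fm" | Disj "'a fm" "'a fm" | Imp "'a fm" "'a fm"

text \<open>Atomic rule (Q1 |> q1, ..., Qn |> qn) => q, represented as the list of premises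
  (finite atom set Qi, atom qi) and the conclusion q.\<close>
type_synonym 'a rule = "('a set \<times> 'a) list \<times> 'a"

definition is_rule :: "'a rule \<Rightarrow> bool" where
  "is_rule r \<longleftrightarrow> (\<forall>(Q, q) \<in> set (fst r). finite Q)"

definition is_base :: "'a rule set \<Rightarrow> bool" where
  "is_base B \<longleftrightarrow> (\<forall>r\<in>B. is_rule r)"

inductive deriv :: "'a rule set \<Rightarrow> 'a set \<Rightarrow> 'a \<Rightarrow> bool" where
  ax: "q \<in> S \<Longrightarrow> deriv B S q"
| app: "(prems, q) \<in> B \<Longrightarrow> (\<forall>(Qi, qi) \<in> set prems. deriv B (S \<union> Qi) qi) \<Longrightarrow> deriv B S q"

text \<open>Support ||-*_B phi, with the context form Gamma ||-*_B phi for nonempty finite Gamma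
  inlined (in the implication clause Gamma = {phi}).\<close>
primrec supp :: "'a rule set \<Rightarrow> 'a fm \<Rightarrow> bool" where
  "supp B (Atom p) = deriv B {} p"
| "supp B (Imp \<phi> \<psi>) = (\<forall>C. is_base C \<and> B \<subseteq> C \<longrightarrow> supp C \<phi> \<longrightarrow> supp C \<psi>)"
| "supp B (Conj \<phi> \<psi>) = (\<forall>C p. is_base C \<and> B \<subseteq> C \<longrightarrow>
      (\<forall>D. is_base D \<and> C \<subseteq> D \<longrightarrow> supp D \<phi> \<and> supp D \<psi> \<longrightarrow> deriv D {} p) \<longrightarrow> deriv C {} p)"
| "supp B (Disj \<phi> \<psi>) = (\<forall>C p. is_base C \<and> B \<subseteq> C \<longrightarrow>
      (\<forall>D. is_base D \<and> C \<subseteq> D \<longrightarrow> supp D \<phi> \<longrightarrow> deriv D {} p) \<longrightarrow>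
      (\<forall>D. is_base D \<and> C \<subseteq> D \<longrightarrow> supp D \<psi> \<longrightarrow> deriv D {} p) \<longrightarrow> deriv C {} p)"
| "supp B Bot = (\<forall>p. deriv B {} p)"

definition supp_ctx :: "'a rule set \<Rightarrow> 'a fm set \<Rightarrow> 'a fm \<Rightarrow> bool" where
  "supp_ctx B \<Gamma> \<phi> \<longleftrightarrow> (\<forall>C. is_base C \<and> B \<subseteq> C \<longrightarrow> (\<forall>\<psi>\<in>\<Gamma>. supp C \<psi>) \<longrightarrow> supp C \<phi>)"

end

theory Submission
  imports Defs
begin

text \<open>Every clause of the support relation except implication concludes with the derivability
  of an atom in an arbitrary extension, and atoms can be concluded by eliminating the
  conjunction directly. Implication is handled by induction on the formula, applying the
  induction hypothesis in the extended base that supports the antecedent.\<close>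

lemma deriv_mono: "deriv B S q \<Longrightarrow> B \<subseteq> C \<Longrightarrow> deriv C S q"
proof (induction rule: deriv.induct)
  case (ax q S B)
  then show ?case by (simp add: deriv.ax)
next
  case (app prems q B S)
  then show ?case by (intro deriv.app[of prems q]) auto
qed

lemma supp_mono: "supp B \<chi> \<Longrightarrow> B \<subseteq> C \<Longrightarrow> supp C \<chi>"
  by (cases \<chi>) (auto intro: deriv_mono)

lemma supp_Conj_elim_deriv:
  assumes "is_base B" "supp B (Conj \<phi> \<psi>)"
    and "\<And>C. is_base C \<Longrightarrow> B \<subseteq> C \<Longrightarrow> supp C \<phi> \<Longrightarrow> supp C \<psi> \<Longrightarrow> deriv C {} p"
  shows "deriv B {} p"
  using assms by auto

lemma supp_Conj_elim:
  assumes "is_base B" "supp B (Conj \<phi> \<psi>)"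
    and "\<And>C. is_base C \<Longrightarrow> B \<subseteq> C \<Longrightarrow> supp C \<phi> \<Longrightarrow> supp C \<psi> \<Longrightarrow> supp C \<chi>"
  shows "supp B \<chi>"
  using assms
proof (induction \<chi> arbitrary: B)
  case (Atom p)
  then show ?case using supp_Conj_elim_deriv[of B] by simp
next
  case Bot
  then show ?case using supp_Conj_elim_deriv[of B] by simp
next
  case (Imp \<chi>1 \<chi>2)
  show ?case
  proof (simp, intro allI impI, elim conjE)
    fix C assume C: "is_base C" "B \<subseteq> C" "supp C \<chi>1"
    show "supp C \<chi>2"
    proof (rule Imp.IH(2)[OF C(1) supp_mono[OF Imp.prems(2) C(2)]])
      fix D assume D: "is_base D" "C \<subseteq> D" "supp D \<phi>" "supp D \<psi>"
      then have "supp D (Imp \<chi>1 \<chi>2)" using Imp.prems(3) C(2) by auto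
      then show "supp D \<chi>2" using D(1,2) supp_mono[OF C(3) D(2)] by auto
    qed
  qed
next
  case (Conj \<chi>1 \<chi>2)
  show ?case
  proof (simp, intro allI impI, elim conjE)
    fix C p assume C: "is_base C" "B \<subseteq> C"
      and p: "\<forall>D. is_base D \<and> C \<subseteq> D \<longrightarrow> supp D \<chi>1 \<and> supp D \<chi>2 \<longrightarrow> deriv D {} p"
    show "deriv C {} p"
    proof (rule supp_Conj_elim_deriv[OF C(1) supp_mono[OF Conj.prems(2) C(2)]])
      fix D assume D: "is_base D" "C \<subseteq> D" "supp D \<phi>" "supp D \<psi>"
      then have "supp D (Conj \<chi>1 \<chi>2)" using Conj.prems(3) C(2) by auto
      moreover have "\<forall>E. is_base E \<and> D \<subseteq> E \<longrightarrow> supp E \<chi>1 \<and> supp E \<chi>2 \<longrightarrow> deriv E {} p"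
        using p D(2) by blast
      ultimately show "deriv D {} p" using D(1) by auto
    qed
  qed
next
  case (Disj \<chi>1 \<chi>2)
  show ?case
  proof (simp, intro allI impI, elim conjE)
    fix C p assume C: "is_base C" "B \<subseteq> C"
      and p1: "\<forall>D. is_base D \<and> C \<subseteq> D \<longrightarrow> supp D \<chi>1 \<longrightarrow> deriv D {} p"
      and p2: "\<forall>D. is_base D \<and> C \<subseteq> D \<longrightarrow> supp D \<chi>2 \<longrightarrow> deriv D {} p"
    show "deriv C {} p"
    proof (rule supp_Conj_elim_deriv[OF C(1) supp_mono[OF Disj.prems(2) C(2)]])
      fix D assume D: "is_base D" "C \<subseteq> D" "supp D \<phi>" "supp D \<psi>"
      then have "supp D (Disj \<chi>1 \<chi>2)" using Disj.prems(3) C(2) by auto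
      moreover have "\<forall>E. is_base E \<and> D \<subseteq> E \<longrightarrow> supp E \<chi>1 \<longrightarrow> deriv E {} p"
        and "\<forall>E. is_base E \<and> D \<subseteq> E \<longrightarrow> supp E \<chi>2 \<longrightarrow> deriv E {} p"
        using p1 p2 D(2) by blast+
      ultimately show "deriv D {} p" using D(1) by auto
    qed
  qed
qed

theorem mainTheorem4:
  fixes B :: "('a::countable) rule set" and \<phi> \<psi> \<chi> :: "'a fm"
  assumes "infinite (UNIV :: 'a set)"
    and "is_base B"
    and "supp B (Conj \<phi> \<psi>)"
    and "supp_ctx B {\<phi>, \<psi>} \<chi>"
  shows "supp B \<chi>"
proof (rule supp_Conj_elim[OF assms(2,3)])
  fix C assume "is_base C" "B \<subseteq> C" "supp C \<phi>" "supp C \<psi>"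
  then show "supp C \<chi>" using assms(4) by (simp add: supp_ctx_def)
qed

end
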